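(* Let $p\geq 1$, $\vec n=(n_1,\dots,n_p)\in\mathbb N_0^p$, $N\in\mathbb N_0$ with $|\vec n|\le N$, and let $\alpha_1,\dots,\alpha_p,\beta,x\in\mathbb R$ be such that all Pochhammer symbols appearing in denominators below are nonzero. Then $$\sum_{l_1=0}^{n_1}\cdots\sum_{l_p=0}^{n_p}\frac{(-N)_{l_1+\cdots+l_p}\,(x)_{l_1+\cdots+l_p}}{(x+\beta+1)_{l_1+\cdots+l_p}}\,C^{l_1,\dots,l_p}_{\vec n}=\frac{(\beta+1)_{|\vec n|}(-N)_{|\vec n|}}{(x+\beta+1)_{|\vec n|}}\prod_{q=1}^p\frac{(\alpha_q-x+1)_{n_q}}{(\alpha_q+\beta+|\vec n|+1)_{n_q}}.$$
   Context: $(a)_m=a(a+1)\cdots(a+m-1)$, $(a)_0=1$; $|\vec n|=n_1+\cdots+n_p$. The coefficients (those of the multiple Hahn type II polynomials) are $$C^{l_1,\dots,l_p}_{\vec n}=\frac{(-N)_{|\vec n|}}{(-N)_{l_1+\cdots+l_p}}\prod_{i=1}^p\frac{(\alpha_i+1)_{n_i}}{(\alpha_i+\beta+|\vec n|+1)_{n_i}}\frac{(-n_i)_{l_i}}{l_i!}\frac{(\alpha_i+\beta+\sum_{k=1}^i n_k+1)_{\sum_{j=i}^p l_j}}{(\alpha_i+1)_{\sum_{j=i}^p l_j}}\prod_{i=1}^{p-1}\frac{(\alpha_i+n_i+1)_{\sum_{j=i+1}^p l_j}}{(\alpha_i+\beta+\sum_{k=1}^i n_k+1)_{\sum_{j=i+1}^p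 l_j}}.$$ *)

theory Defs
  imports Complex_Main "HOL-Library.FuncSet"
begin

text \<open>Multi-indices are functions nat => nat used on the index set {1..p}.
  (a)_m is pochhammer a m; (-N)_m is pochhammer (- real N) m.\<close>

definition hahnC :: "nat \<Rightarrow> nat \<Rightarrow> (nat \<Rightarrow> real) \<Rightarrow> real \<Rightarrow> (nat \<Rightarrow> nat) \<Rightarrow> (nat \<Rightarrow> nat) \<Rightarrow> real" where
  "hahnC p N \<alpha> \<beta> n l =
     pochhammer (- real N) (\<Sum>k=1..p. n k) / pochhammer (- real N) (\<Sum>k=1..p. l k)
     * (\<Prod>i=1..p.
          pochhammer (\<alpha> i + 1) (n i) / pochhammer (\<alpha> i + \<beta> + real (\<Sum>k=1..p. n k) + 1) (n i)
          * (pochhammer (- real (n i)) (l i) / fact (l i))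
          * (pochhammer (\<alpha> i + \<beta> + real (\<Sum>k=1..i. n k) + 1) (\<Sum>j=i..p. l j)
             / pochhammer (\<alpha> i + 1) (\<Sum>j=i..p. l j)))
     * (\<Prod>i=1..p-1.
          pochhammer (\<alpha> i + real (n i) + 1) (\<Sum>j=i+1..p. l j)
          / pochhammer (\<alpha> i + \<beta> + real (\<Sum>k=1..i. n k) + 1) (\<Sum>j=i+1..p. l j))"

end

theory Submission
  imports Defs
begin

text \<open>
  Fix \<open>l\<^sub>s\<^sub>+\<^sub>1, \<dots>, l\<^sub>p\<close> and sum over \<open>l\<^sub>s\<close>. With \<open>L = l\<^sub>s\<^sub>+\<^sub>1 + \<dots> + l\<^sub>p\<close>, the factors
  depending on \<open>l\<^sub>s\<close> form the terminating balanced series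
  \<open>\<^sub>3F\<^sub>2(-n\<^sub>s, x + L, \<alpha>\<^sub>s + \<beta> + n\<^sub>s + 1 + L; x + \<beta> + 1 + L, \<alpha>\<^sub>s + 1 + L; 1)\<close>, which the
  Pfaff-Saalschuetz formula evaluates. What remains has the same shape in the indices \<open>s + 1, \<dots>, p\<close>
  with \<open>\<beta>\<close> replaced by \<open>\<beta> + n\<^sub>s\<close>, so induction on \<open>s\<close> peels off one index at a time, each step
  contributing \<open>(\<beta> + 1)\<^sub>n\<^sub>s (\<alpha>\<^sub>s - x + 1)\<^sub>n\<^sub>s / ((x + \<beta> + 1)\<^sub>n\<^sub>s (\<alpha>\<^sub>s + 1)\<^sub>n\<^sub>s)\<close>.
  The Pfaff-Saalschuetz formula itself reduces to a polynomial identity, which is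
  Chu-Vandermonde applied three times.
\<close>

lemma pochhammer_binomial_sum_shifted:
  fixes a f :: "'a :: comm_ring_1"
  assumes "s \<le> n"
  shows "(\<Sum>k\<le>s. of_nat (s choose k) * pochhammer a k * pochhammer f (n - k))
         = pochhammer f (n - s) * pochhammer (a + (f + of_nat (n - s))) s"
proof -
  have "(\<Sum>k\<le>s. of_nat (s choose k) * pochhammer a k * pochhammer f (n - k))
      = pochhammer f (n - s) * (\<Sum>k\<le>s. of_nat (s choose k) * pochhammer a k
                                         * pochhammer (f + of_nat (n - s)) (s - k))"
    unfolding sum_distrib_left
  proof (intro sum.cong refl)
    fix k assume "k \<in> {..s}"
    then have "pochhammer f (n - k)
               = pochhammer f (n - s) * pochhammer (f + of_nat (n - s)) (s - k)"
      using pochhammer_product'[of f "n - s" "s - k"] assms by simp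
    then show "of_nat (s choose k) * pochhammer a k * pochhammer f (n - k)
        = pochhammer f (n - s) * (of_nat (s choose k) * pochhammer a k
                                  * pochhammer (f + of_nat (n - s)) (s - k))"
      by (simp add: ac_simps)
  qed
  also have "\<dots> = pochhammer f (n - s) * pochhammer (a + (f + of_nat (n - s))) s"
    unfolding pochhammer_binomial_sum[of a "f + of_nat (n - s)" s] ..
  finally show ?thesis .
qed

lemma sum_nested_triangle_reindex:
  fixes n :: nat
  shows "(\<Sum>k\<le>n. \<Sum>j\<le>n - k. g k j) = (\<Sum>s\<le>n. \<Sum>k\<le>s. g k (s - k))"
proof -
  have "{(k, j). k + j \<le> n} = Sigma {..n} (\<lambda>k. {..n - k})"
    by auto
  then have "(\<Sum>k\<le>n. \<Sum>j\<le>n - k. g k j) = (\<Sum>(k, j)\<in>{(k, j). k + j \<le> n}. g k j)"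
    by (simp add: sum.Sigma)
  also have "\<dots> = (\<Sum>s\<le>n. \<Sum>k\<le>s. g k (s - k))"
    by (rule sum.triangle_reindex_eq)
  finally show ?thesis .
qed

lemma binomial_pochhammer_diagonal:
  fixes b :: "'a :: comm_ring_1"
  assumes "k \<le> s" "s \<le> n"
  shows "of_nat (n choose k) * of_nat ((n - k) choose (s - k))
           * pochhammer b k * pochhammer (b + of_nat k) (s - k)
       = of_nat (n choose s) * of_nat (s choose k) * pochhammer b s"
proof -
  have "(n choose k) * ((n - k) choose (s - k)) = (n choose s) * (s choose k)"
    using choose_mult[of k s n] assms by (simp add: mult.commute)
  then have "of_nat (n choose k) * of_nat ((n - k) choose (s - k))
             = (of_nat (n choose s) * of_nat (s choose k) :: 'a)"
    by (metis of_nat_mult)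
  moreover have "pochhammer b k * pochhammer (b + of_nat k) (s - k) = pochhammer b s"
    using pochhammer_product'[of b k "s - k"] assms by simp
  ultimately show ?thesis
    by (metis mult.assoc)
qed

lemma pfaff_saalschuetz_polynomial:
  fixes a b f :: "'a :: comm_ring_1"
  shows "(\<Sum>k\<le>n. of_nat (n choose k) * pochhammer a k * pochhammer b k
            * pochhammer (f + a + b + of_nat k) (n - k) * pochhammer f (n - k))
         = pochhammer (f + a) n * pochhammer (f + b) n"
proof -
  define g where "g k j = of_nat (n choose k) * of_nat ((n - k) choose j) * pochhammer b k
      * pochhammer (b + of_nat k) j * (pochhammer a k * pochhammer f (n - k)
      * pochhammer (f + a) (n - k - j))" for k j
  have "(\<Sum>k\<le>n. of_nat (n choose k) * pochhammer a k * pochhammer b k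
            * pochhammer (f + a + b + of_nat k) (n - k) * pochhammer f (n - k))
      = (\<Sum>k\<le>n. \<Sum>j\<le>n - k. g k j)"
  proof (intro sum.cong refl)
    fix k
    have "pochhammer (f + a + b + of_nat k) (n - k) = (\<Sum>j\<le>n - k. of_nat ((n - k) choose j)
            * pochhammer (b + of_nat k) j * pochhammer (f + a) (n - k - j))"
      using pochhammer_binomial_sum[of "b + of_nat k" "f + a" "n - k"] by (simp add: ac_simps)
    then show "of_nat (n choose k) * pochhammer a k * pochhammer b k
            * pochhammer (f + a + b + of_nat k) (n - k) * pochhammer f (n - k) = (\<Sum>j\<le>n - k. g k j)"
      unfolding g_def by (simp add: sum_distrib_left ac_simps)
  qed
  also have "\<dots> = (\<Sum>s\<le>n. \<Sum>k\<le>s. g k (s - k))"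
    by (rule sum_nested_triangle_reindex)
  also have "\<dots> = (\<Sum>s\<le>n. of_nat (n choose s) * pochhammer b s * pochhammer (f + a) (n - s)
      * (\<Sum>k\<le>s. of_nat (s choose k) * pochhammer a k * pochhammer f (n - k)))"
    unfolding sum_distrib_left
  proof (intro sum.cong refl)
    fix s k assume "s \<in> {..n}" "k \<in> {..s}"
    then have ks: "k \<le> s" "s \<le> n" and "n - k - (s - k) = n - s" by auto
    then show "g k (s - k) = of_nat (n choose s) * pochhammer b s * pochhammer (f + a) (n - s)
        * (of_nat (s choose k) * pochhammer a k * pochhammer f (n - k))"
      unfolding g_def binomial_pochhammer_diagonal[OF ks] by (simp add: ac_simps)
  qed
  also have "\<dots> = (\<Sum>s\<le>n. of_nat (n choose s) * pochhammer b s * pochhammer f (n - s))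
                  * pochhammer (f + a) n"
    unfolding sum_distrib_right
  proof (intro sum.cong refl)
    fix s assume "s \<in> {..n}"
    then have "s \<le> n" by simp
    have "pochhammer (f + a) n
          = pochhammer (f + a) (n - s) * pochhammer (a + (f + of_nat (n - s))) s"
      using pochhammer_product'[of "f + a" "n - s" s] \<open>s \<le> n\<close> by (simp add: algebra_simps)
    then show "of_nat (n choose s) * pochhammer b s * pochhammer (f + a) (n - s)
      * (\<Sum>k\<le>s. of_nat (s choose k) * pochhammer a k * pochhammer f (n - k))
      = of_nat (n choose s) * pochhammer b s * pochhammer f (n - s) * pochhammer (f + a) n"
      unfolding pochhammer_binomial_sum_shifted[OF \<open>s \<le> n\<close>] by (simp only: ac_simps)
  qed
  also have "\<dots> = pochhammer (f + a) n * pochhammer (f + b) n"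
    unfolding pochhammer_binomial_sum[of b f n, unfolded add.commute[of b f], symmetric]
    by (rule mult.commute)
  finally show ?thesis .
qed

lemma pochhammer_neg_of_nat_div_fact:
  "pochhammer (- of_nat m) k / fact k = ((-1) ^ k * of_nat (m choose k) :: 'a :: field_char_0)"
proof -
  have "(of_nat (m choose k) :: 'a) = (-1) ^ k * pochhammer (- of_nat m) k / fact k"
    by (simp add: binomial_gbinomial gbinomial_pochhammer)
  moreover have "(-1) ^ k * (-1) ^ k = (1 :: 'a)"
    by (simp flip: power_add)
  ultimately show ?thesis
    by (simp add: mult.assoc[symmetric])
qed

lemma pfaff_saalschuetz_summand:
  fixes a b c e :: "'a :: field_char_0"
  assumes balanced: "c + e = 1 + a + b - of_nat m"
    and "pochhammer c m \<noteq> 0" and "pochhammer e m \<noteq> 0" and "k \<le> m"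
  shows "pochhammer (- of_nat m) k / fact k * pochhammer a k * pochhammer b k
           / (pochhammer c k * pochhammer e k)
       = (-1) ^ m / (pochhammer c m * pochhammer e m) * (of_nat (m choose k) * pochhammer a k
           * pochhammer b k * pochhammer (c + of_nat k) (m - k) * pochhammer (c - a - b) (m - k))"
proof -
  have cm: "pochhammer c m = pochhammer c k * pochhammer (c + of_nat k) (m - k)"
    and em: "pochhammer e m = pochhammer e k * pochhammer (e + of_nat k) (m - k)"
    using pochhammer_product'[of _ k "m - k"] \<open>k \<le> m\<close> by simp_all
  \<comment> \<open>balancing makes \<open>(c - a - b)\<^sub>m\<^sub>-\<^sub>k\<close> the reflection of \<open>(e + k)\<^sub>m\<^sub>-\<^sub>k\<close>\<close>
  have "c - a - b = - (e + of_nat m - 1)"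
    using balanced by (simp add: algebra_simps)
  moreover have "e + of_nat m - 1 - of_nat (m - k) + 1 = e + of_nat k"
    using \<open>k \<le> m\<close> by simp
  ultimately have reflect:
      "pochhammer (c - a - b) (m - k) = (-1) ^ (m - k) * pochhammer (e + of_nat k) (m - k)"
    using pochhammer_minus[of "e + of_nat m - 1" "m - k"] by simp
  have "(-1 :: 'a) ^ m = (-1) ^ k * (-1) ^ (m - k)" and "(-1 :: 'a) ^ (m - k) * (-1) ^ (m - k) = 1"
    using \<open>k \<le> m\<close> by (simp_all flip: power_add)
  moreover have "pochhammer (c + of_nat k) (m - k) \<noteq> 0" "pochhammer (e + of_nat k) (m - k) \<noteq> 0"
    using assms(2,3) cm em by auto
  ultimately show ?thesis
    unfolding cm em reflect pochhammer_neg_of_nat_div_fact by (simp add: field_simps)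
qed

lemma pfaff_saalschuetz:
  fixes a b c e :: "'a :: field_char_0"
  assumes balanced: "c + e = 1 + a + b - of_nat m"
    and "pochhammer c m \<noteq> 0" and "pochhammer e m \<noteq> 0"
  shows "(\<Sum>k\<le>m. pochhammer (- of_nat m) k / fact k * pochhammer a k * pochhammer b k
            / (pochhammer c k * pochhammer e k))
       = pochhammer (c - a) m * pochhammer (e - a) m / (pochhammer c m * pochhammer e m)"
proof -
  have "c - b = - (e - a + of_nat m - 1)"
    using balanced by (simp add: algebra_simps)
  then have "pochhammer (c - b) m = (-1) ^ m * pochhammer (e - a) m"
    by (simp only: pochhammer_minus) simp
  then have sign: "(-1) ^ m * (pochhammer (c - b) m * pochhammer (c - a) m)
                   = pochhammer (c - a) m * pochhammer (e - a) m"
    by (simp add: algebra_simps flip: power_add)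
  have "(\<Sum>k\<le>m. pochhammer (- of_nat m) k / fact k * pochhammer a k * pochhammer b k
            / (pochhammer c k * pochhammer e k))
      = (-1) ^ m / (pochhammer c m * pochhammer e m) * (\<Sum>k\<le>m. of_nat (m choose k)
          * pochhammer a k * pochhammer b k * pochhammer (c + of_nat k) (m - k)
          * pochhammer (c - a - b) (m - k))"
    unfolding sum_distrib_left by (intro sum.cong refl pfaff_saalschuetz_summand assms) simp
  also have "\<dots> = (-1) ^ m * (pochhammer (c - b) m * pochhammer (c - a) m)
                    / (pochhammer c m * pochhammer e m)"
    using pfaff_saalschuetz_polynomial[of m a b "c - a - b"] by simp
  finally show ?thesis
    by (simp only: sign)
qed

lemma pochhammer_shift_neq_0:
  "pochhammer z (m + L) \<noteq> 0 \<Longrightarrow> pochhammer (z + of_nat m) L \<noteq> 0"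
  using pochhammer_product'[of z m L] by auto

lemma pochhammer_split_last:
  "pochhammer z (k + L) = pochhammer z L * pochhammer (z + of_nat L) k"
  using pochhammer_product'[of z L k] by (simp add: add.commute)

lemma pochhammer_split_comm:
  "pochhammer z L * pochhammer (z + of_nat L) m = pochhammer z m * pochhammer (z + of_nat m) L"
  by (metis pochhammer_product' add.commute)

lemma pfaff_saalschuetz_shifted:
  fixes a b c e :: "'a :: field_char_0"
  assumes "c + e = 1 + a + b - of_nat m"
    and "pochhammer c (L + m) \<noteq> 0" and "pochhammer e (L + m) \<noteq> 0"
  shows "(\<Sum>k\<le>m. pochhammer (- of_nat m) k / fact k * pochhammer a (k + L) * pochhammer b (k + L)
            / (pochhammer c (k + L) * pochhammer e (k + L)))
       = pochhammer a L * pochhammer b L / (pochhammer c L * pochhammer e L)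
         * (pochhammer (c - a) m * pochhammer (e - a) m
            / (pochhammer (c + of_nat L) m * pochhammer (e + of_nat L) m))"
proof -
  have "(c + of_nat L) + (e + of_nat L) = 1 + (a + of_nat L) + (b + of_nat L) - of_nat m"
    using assms(1) by (simp add: algebra_simps)
  note saalschuetz = pfaff_saalschuetz[OF this pochhammer_shift_neq_0[OF assms(2)]
      pochhammer_shift_neq_0[OF assms(3)]]
  have "(\<Sum>k\<le>m. pochhammer (- of_nat m) k / fact k * pochhammer a (k + L) * pochhammer b (k + L)
            / (pochhammer c (k + L) * pochhammer e (k + L)))
       = pochhammer a L * pochhammer b L / (pochhammer c L * pochhammer e L)
         * (\<Sum>k\<le>m. pochhammer (- of_nat m) k / fact k * pochhammer (a + of_nat L) k
              * pochhammer (b + of_nat L) k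
              / (pochhammer (c + of_nat L) k * pochhammer (e + of_nat L) k))"
    unfolding pochhammer_split_last sum_distrib_left
    by (intro sum.cong refl) (simp add: divide_inverse ac_simps)
  then show ?thesis
    unfolding saalschuetz by simp
qed

lemma hahn_single_sum:
  fixes x \<beta> \<alpha> :: real and m L :: nat
  assumes x0: "pochhammer (x + \<beta> + 1) (L + m) \<noteq> 0"
    and a0: "pochhammer (\<alpha> + 1) (L + m) \<noteq> 0"
    and b0: "pochhammer (\<alpha> + \<beta> + real m + 1) L \<noteq> 0"
  shows "(\<Sum>k=0..m. pochhammer x (k + L) / pochhammer (x + \<beta> + 1) (k + L)
            * (pochhammer (- real m) k / fact k
               * (pochhammer (\<alpha> + \<beta> + real m + 1) (k + L) / pochhammer (\<alpha> + 1) (k + L))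
               * (pochhammer (\<alpha> + real m + 1) L / pochhammer (\<alpha> + \<beta> + real m + 1) L)))
       = pochhammer x L / pochhammer (x + \<beta> + real m + 1) L
         * (pochhammer (\<beta> + 1) m * pochhammer (\<alpha> - x + 1) m
            / (pochhammer (x + \<beta> + 1) m * pochhammer (\<alpha> + 1) m))"
proof -
  let ?X = "x + \<beta> + 1" and ?A = "\<alpha> + 1" and ?B = "\<alpha> + \<beta> + real m + 1"
  have "?X + ?A = 1 + x + ?B - of_nat m"
    by simp
  note saalschuetz = pfaff_saalschuetz_shifted[OF this x0 a0]
  have "?X - x = \<beta> + 1" "?A - x = \<alpha> - x + 1"
    by simp_all
  have "(\<Sum>k=0..m. pochhammer x (k + L) / pochhammer ?X (k + L)
            * (pochhammer (- real m) k / fact k * (pochhammer ?B (k + L) / pochhammer ?A (k + L))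
               * (pochhammer (\<alpha> + real m + 1) L / pochhammer ?B L)))
      = pochhammer (\<alpha> + real m + 1) L / pochhammer ?B L
        * (\<Sum>k\<le>m. pochhammer (- of_nat m) k / fact k * pochhammer x (k + L) * pochhammer ?B (k + L)
             / (pochhammer ?X (k + L) * pochhammer ?A (k + L)))"
    unfolding atLeast0AtMost sum_distrib_left by (intro sum.cong refl) (simp add: field_simps)
  also have "\<dots> = pochhammer x L * pochhammer (\<beta> + 1) m * pochhammer (\<alpha> - x + 1) m
      * (pochhammer ?B L * pochhammer (\<alpha> + real m + 1) L)
      / ((pochhammer ?X L * pochhammer (?X + of_nat L) m)
         * (pochhammer ?A L * pochhammer (?A + of_nat L) m)
         * pochhammer ?B L)"
    unfolding saalschuetz \<open>?X - x = \<beta> + 1\<close> \<open>?A - x = \<alpha> - x + 1\<close>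
    by (simp add: divide_inverse ac_simps)
  also have "\<dots> = pochhammer x L * pochhammer (\<beta> + 1) m * pochhammer (\<alpha> - x + 1) m
      * (pochhammer ?B L * pochhammer (\<alpha> + real m + 1) L)
      / ((pochhammer ?X m * pochhammer (x + \<beta> + real m + 1) L)
         * (pochhammer ?A m * pochhammer (\<alpha> + real m + 1) L) * pochhammer ?B L)"
    unfolding pochhammer_split_comm[of ?X L m] pochhammer_split_comm[of ?A L m]
    by (simp add: ac_simps)
  also have "\<dots> = pochhammer x L / pochhammer (x + \<beta> + real m + 1) L
         * (pochhammer (\<beta> + 1) m * pochhammer (\<alpha> - x + 1) m / (pochhammer ?X m * pochhammer ?A m))"
    using pochhammer_shift_neq_0[of ?A m L] a0 b0 by (simp add: field_simps add.commute)
  finally show ?thesis .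
qed

lemma sum_PiE_insert:
  assumes "a \<notin> S"
  shows "(\<Sum>g\<in>PiE (insert a S) B. h g) = (\<Sum>y\<in>B a. \<Sum>g\<in>PiE S B. h (g(a := y)))"
proof -
  have "(\<Sum>g\<in>PiE (insert a S) B. h g) = (\<Sum>z\<in>B a \<times> PiE S B. h ((\<lambda>(y, g). g(a := y)) z))"
    unfolding PiE_insert_eq by (rule sum.reindex[OF inj_combinator[OF assms], unfolded comp_def])
  also have "\<dots> = (\<Sum>y\<in>B a. \<Sum>g\<in>PiE S B. h (g(a := y)))"
    by (simp add: sum.cartesian_product split_def)
  finally show ?thesis .
qed

context
  fixes p :: nat and n :: "nat \<Rightarrow> nat" and \<alpha> :: "nat \<Rightarrow> real" and x :: real
begin

definition hahn_factor :: "nat \<Rightarrow> real \<Rightarrow> (nat \<Rightarrow> nat) \<Rightarrow> nat \<Rightarrow> real" where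
  "hahn_factor s \<beta> l i =
     pochhammer (- real (n i)) (l i) / fact (l i)
     * (pochhammer (\<alpha> i + \<beta> + real (\<Sum>k=s..i. n k) + 1) (\<Sum>j=i..p. l j)
        / pochhammer (\<alpha> i + 1) (\<Sum>j=i..p. l j))
     * (pochhammer (\<alpha> i + real (n i) + 1) (\<Sum>j=Suc i..p. l j)
        / pochhammer (\<alpha> i + \<beta> + real (\<Sum>k=s..i. n k) + 1) (\<Sum>j=Suc i..p. l j))"

text \<open>
  \<open>hahn_term 1 \<beta> l\<close> is the summand of the theorem without the factor
  \<open>(-N)\<^sub>|\<^sub>n\<^sub>| \<Prod>\<^sub>i (\<alpha>\<^sub>i + 1)\<^sub>n\<^sub>i / (\<alpha>\<^sub>i + \<beta> + |n| + 1)\<^sub>n\<^sub>i\<close>, which does not depend on \<open>l\<close>; in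
  \<open>hahn_term s \<beta>\<close> only the indices \<open>s, \<dots>, p\<close> are left and \<open>\<beta>\<close> stands for \<open>\<beta> + n\<^sub>1 + \<dots> + n\<^sub>s\<^sub>-\<^sub>1\<close>.
\<close>

definition hahn_term :: "nat \<Rightarrow> real \<Rightarrow> (nat \<Rightarrow> nat) \<Rightarrow> real" where
  "hahn_term s \<beta> l = pochhammer x (\<Sum>j=s..p. l j) / pochhammer (x + \<beta> + 1) (\<Sum>j=s..p. l j)
     * (\<Prod>i=s..p. hahn_factor s \<beta> l i)"

lemma hahn_factor_fun_upd_shift:
  assumes "s < i"
  shows "hahn_factor s \<beta> (l(s := k)) i = hahn_factor (Suc s) (\<beta> + real (n s)) l i"
proof -
  have "(\<Sum>k=s..i. n k) = n s + (\<Sum>k=Suc s..i. n k)"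
    using assms by (simp add: sum.atLeast_Suc_atMost)
  moreover have "(\<Sum>j=t..p. (l(s := k)) j) = (\<Sum>j=t..p. l j)" if "s < t" for t
    using that by (intro sum.cong) auto
  ultimately show ?thesis
    unfolding hahn_factor_def using assms by (simp add: ac_simps)
qed

lemma hahn_term_fun_upd:
  fixes \<beta> :: real and s :: nat and l :: "nat \<Rightarrow> nat"
  assumes "s \<le> p" and L_def: "L = (\<Sum>j=Suc s..p. l j)"
  shows "hahn_term s \<beta> (l(s := k))
       = pochhammer x (k + L) / pochhammer (x + \<beta> + 1) (k + L)
         * (pochhammer (- real (n s)) k / fact k
            * (pochhammer (\<alpha> s + \<beta> + real (n s) + 1) (k + L) / pochhammer (\<alpha> s + 1) (k + L))
            * (pochhammer (\<alpha> s + real (n s) + 1) L / pochhammer (\<alpha> s + \<beta> + real (n s) + 1) L))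
         * (\<Prod>i=Suc s..p. hahn_factor (Suc s) (\<beta> + real (n s)) l i)"
proof -
  have "(\<Prod>i=s..p. hahn_factor s \<beta> (l(s := k)) i)
        = hahn_factor s \<beta> (l(s := k)) s * (\<Prod>i=Suc s..p. hahn_factor (Suc s) (\<beta> + real (n s)) l i)"
    using assms(1) by (simp add: prod.atLeast_Suc_atMost hahn_factor_fun_upd_shift)
  moreover have "(\<Sum>j=s..p. (l(s := k)) j) = k + L" "(\<Sum>j=Suc s..p. (l(s := k)) j) = L"
    unfolding L_def using assms(1) by (simp_all add: sum.atLeast_Suc_atMost)
  ultimately show ?thesis
    unfolding hahn_term_def hahn_factor_def by simp
qed

lemma sum_hahn_term_fun_upd:
  fixes \<beta> :: real and s :: nat and l :: "nat \<Rightarrow> nat"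
  defines "m \<equiv> n s"
  assumes "s \<le> p" and l: "l \<in> PiE {Suc s..p} (\<lambda>j. {0..n j})"
    and x0: "pochhammer (x + \<beta> + 1) (\<Sum>j=s..p. n j) \<noteq> 0"
    and a0: "pochhammer (\<alpha> s + 1) (\<Sum>j=s..p. n j) \<noteq> 0"
    and b0: "pochhammer (\<alpha> s + \<beta> + real m + 1) (\<Sum>j=Suc s..p. n j) \<noteq> 0"
  shows "(\<Sum>k=0..m. hahn_term s \<beta> (l(s := k)))
       = pochhammer (\<beta> + 1) m * pochhammer (\<alpha> s - x + 1) m
         / (pochhammer (x + \<beta> + 1) m * pochhammer (\<alpha> s + 1) m)
         * hahn_term (Suc s) (\<beta> + real m) l"
proof -
  define L where "L = (\<Sum>j=Suc s..p. l j)"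
  define R where "R = (\<Prod>i=Suc s..p. hahn_factor (Suc s) (\<beta> + real m) l i)"
  have tail: "(\<Sum>j=s..p. f j) = f s + (\<Sum>j=Suc s..p. f j)" for f :: "nat \<Rightarrow> nat"
    using \<open>s \<le> p\<close> by (simp add: sum.atLeast_Suc_atMost)
  have L_le: "L \<le> (\<Sum>j=Suc s..p. n j)"
    unfolding L_def using l by (intro sum_mono) auto
  have "hahn_term s \<beta> (l(s := k)) = pochhammer x (k + L) / pochhammer (x + \<beta> + 1) (k + L)
          * (pochhammer (- real m) k / fact k
             * (pochhammer (\<alpha> s + \<beta> + real m + 1) (k + L) / pochhammer (\<alpha> s + 1) (k + L))
             * (pochhammer (\<alpha> s + real m + 1) L / pochhammer (\<alpha> s + \<beta> + real m + 1) L)) * R"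
    for k
    unfolding R_def m_def by (rule hahn_term_fun_upd[OF \<open>s \<le> p\<close> L_def])
  then have "(\<Sum>k=0..m. hahn_term s \<beta> (l(s := k)))
      = (\<Sum>k=0..m. pochhammer x (k + L) / pochhammer (x + \<beta> + 1) (k + L)
          * (pochhammer (- real m) k / fact k
             * (pochhammer (\<alpha> s + \<beta> + real m + 1) (k + L) / pochhammer (\<alpha> s + 1) (k + L))
             * (pochhammer (\<alpha> s + real m + 1) L / pochhammer (\<alpha> s + \<beta> + real m + 1) L))) * R"
    by (simp add: sum_distrib_right)
  also have "\<dots> = pochhammer (\<beta> + 1) m * pochhammer (\<alpha> s - x + 1) m
         / (pochhammer (x + \<beta> + 1) m * pochhammer (\<alpha> s + 1) m)
         * (pochhammer x L / pochhammer (x + (\<beta> + real m) + 1) L * R)"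
  proof -
    have "L + m \<le> (\<Sum>j=s..p. n j)"
      using L_le unfolding tail m_def by simp
    then have "pochhammer (x + \<beta> + 1) (L + m) \<noteq> 0" and "pochhammer (\<alpha> s + 1) (L + m) \<noteq> 0"
      using pochhammer_neq_0_mono x0 a0 by blast+
    from hahn_single_sum[OF this pochhammer_neq_0_mono[OF b0 L_le]] show ?thesis
      by (simp add: ac_simps)
  qed
  finally show ?thesis
    unfolding hahn_term_def R_def L_def .
qed

lemma sum_hahn_term:
  fixes \<beta> :: real and s :: nat
  assumes "s \<le> Suc p"
    and "pochhammer (x + \<beta> + 1) (\<Sum>j=s..p. n j) \<noteq> 0"
    and "\<And>i. i \<in> {s..p} \<Longrightarrow> pochhammer (\<alpha> i + 1) (\<Sum>j=i..p. n j) \<noteq> 0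
           \<and> pochhammer (\<alpha> i + \<beta> + real (\<Sum>k=s..i. n k) + 1) (\<Sum>j=Suc i..p. n j) \<noteq> 0"
  shows "(\<Sum>l\<in>PiE {s..p} (\<lambda>j. {0..n j}). hahn_term s \<beta> l)
       = pochhammer (\<beta> + 1) (\<Sum>j=s..p. n j) / pochhammer (x + \<beta> + 1) (\<Sum>j=s..p. n j)
         * (\<Prod>q=s..p. pochhammer (\<alpha> q - x + 1) (n q) / pochhammer (\<alpha> q + 1) (n q))"
  using assms
proof (induction "Suc p - s" arbitrary: s \<beta>)
  case 0
  then show ?case by (simp add: hahn_term_def)
next
  case (Suc d)
  then have "s \<le> p" by simp
  define m where "m = n s"
  define T where "T = (\<Sum>j=Suc s..p. n j)"
  have tail: "(\<Sum>j=s..p. f j) = f s + (\<Sum>j=Suc s..p. f j)" for f :: "nat \<Rightarrow> nat"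
    using \<open>s \<le> p\<close> by (simp add: sum.atLeast_Suc_atMost)
  have ins: "{s..p} = insert s {Suc s..p}"
    using \<open>s \<le> p\<close> by auto
  have shift: "\<alpha> i + (\<beta> + real m) + real (\<Sum>k=Suc s..i. n k) + 1
               = \<alpha> i + \<beta> + real (\<Sum>k=s..i. n k) + 1" if "s < i" for i
    using that unfolding m_def by (simp add: sum.atLeast_Suc_atMost)
  have x0: "pochhammer (x + \<beta> + 1) (m + T) \<noteq> 0"
    using Suc.prems(2) unfolding tail m_def T_def .
  have step: "(\<Sum>k=0..m. hahn_term s \<beta> (l(s := k)))
       = pochhammer (\<beta> + 1) m * pochhammer (\<alpha> s - x + 1) m
         / (pochhammer (x + \<beta> + 1) m * pochhammer (\<alpha> s + 1) m)
         * hahn_term (Suc s) (\<beta> + real m) l"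
    if "l \<in> PiE {Suc s..p} (\<lambda>j. {0..n j})" for l
    using sum_hahn_term_fun_upd[OF \<open>s \<le> p\<close> that Suc.prems(2)] Suc.prems(3)[of s] \<open>s \<le> p\<close>
    unfolding m_def by simp
  have IH: "(\<Sum>l\<in>PiE {Suc s..p} (\<lambda>j. {0..n j}). hahn_term (Suc s) (\<beta> + real m) l)
       = pochhammer (\<beta> + real m + 1) T / pochhammer (x + (\<beta> + real m) + 1) T
         * (\<Prod>q=Suc s..p. pochhammer (\<alpha> q - x + 1) (n q) / pochhammer (\<alpha> q + 1) (n q))"
    unfolding T_def
  proof (rule Suc.hyps)
    show "d = Suc p - Suc s" "Suc s \<le> Suc p"
      using Suc.hyps(2) \<open>s \<le> p\<close> by simp_all
    show "pochhammer (x + (\<beta> + real m) + 1) (\<Sum>j=Suc s..p. n j) \<noteq> 0"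
      using pochhammer_shift_neq_0[OF x0] unfolding T_def by (simp add: ac_simps)
    show "pochhammer (\<alpha> i + 1) (\<Sum>j=i..p. n j) \<noteq> 0
        \<and> pochhammer (\<alpha> i + (\<beta> + real m) + real (\<Sum>k=Suc s..i. n k) + 1) (\<Sum>j=Suc i..p. n j) \<noteq> 0"
      if "i \<in> {Suc s..p}" for i
    proof -
      have "s < i" "i \<in> {s..p}" using that by auto
      then show ?thesis
        using Suc.prems(3)[of i] unfolding shift[OF \<open>s < i\<close>] by blast
    qed
  qed
  have "(\<Sum>l\<in>PiE {s..p} (\<lambda>j. {0..n j}). hahn_term s \<beta> l)
      = (\<Sum>k=0..m. \<Sum>l\<in>PiE {Suc s..p} (\<lambda>j. {0..n j}). hahn_term s \<beta> (l(s := k)))"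
    unfolding ins m_def by (rule sum_PiE_insert) simp
  also have "\<dots> = (\<Sum>l\<in>PiE {Suc s..p} (\<lambda>j. {0..n j}). \<Sum>k=0..m. hahn_term s \<beta> (l(s := k)))"
    by (rule sum.swap)
  also have "\<dots> = pochhammer (\<beta> + 1) m * pochhammer (\<alpha> s - x + 1) m
         / (pochhammer (x + \<beta> + 1) m * pochhammer (\<alpha> s + 1) m)
         * (\<Sum>l\<in>PiE {Suc s..p} (\<lambda>j. {0..n j}). hahn_term (Suc s) (\<beta> + real m) l)"
    by (simp add: step sum_distrib_left)
  also have "\<dots> = pochhammer (\<beta> + 1) (m + T) / pochhammer (x + \<beta> + 1) (m + T)
         * (\<Prod>q=s..p. pochhammer (\<alpha> q - x + 1) (n q) / pochhammer (\<alpha> q + 1) (n q))"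
    unfolding IH pochhammer_product' ins using \<open>s \<le> p\<close> by (simp add: m_def ac_simps)
  finally show ?case
    unfolding tail m_def T_def .
qed

end

lemma hahn_summand_eq_hahn_term:
  fixes \<beta> x :: real
  assumes "p \<ge> 1" and "pochhammer (- real N) (\<Sum>k=1..p. l k) \<noteq> 0"
  shows "pochhammer (- real N) (\<Sum>k=1..p. l k) * pochhammer x (\<Sum>k=1..p. l k)
           / pochhammer (x + \<beta> + 1) (\<Sum>k=1..p. l k) * hahnC p N \<alpha> \<beta> n l
       = pochhammer (- real N) (\<Sum>k=1..p. n k)
         * (\<Prod>i=1..p. pochhammer (\<alpha> i + 1) (n i)
                        / pochhammer (\<alpha> i + \<beta> + real (\<Sum>k=1..p. n k) + 1) (n i))
         * hahn_term p n \<alpha> x 1 \<beta> l"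
proof -
  \<comment> \<open>the last product of \<open>hahnC\<close> stops at \<open>p - 1\<close>; its \<open>i = p\<close> factor is an empty Pochhammer symbol\<close>
  have "{1..p} = insert p {1..p - 1}"
    using assms(1) by auto
  then have "(\<Prod>i=1..p - 1. pochhammer (\<alpha> i + real (n i) + 1) (\<Sum>j=Suc i..p. l j)
                / pochhammer (\<alpha> i + \<beta> + real (\<Sum>k=1..i. n k) + 1) (\<Sum>j=Suc i..p. l j))
           = (\<Prod>i=1..p. pochhammer (\<alpha> i + real (n i) + 1) (\<Sum>j=Suc i..p. l j)
                / pochhammer (\<alpha> i + \<beta> + real (\<Sum>k=1..i. n k) + 1) (\<Sum>j=Suc i..p. l j))"
    using assms(1) by simp
  then show ?thesis
    using assms(2) unfolding hahnC_def hahn_term_def hahn_factor_def prod.distrib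
    by (simp add: field_simps)
qed

lemma prod_divide_cancel:
  fixes a b c :: "'b \<Rightarrow> 'a :: field"
  assumes "\<And>q. q \<in> Q \<Longrightarrow> a q \<noteq> 0"
  shows "(\<Prod>q\<in>Q. a q / b q) * (\<Prod>q\<in>Q. c q / a q) = (\<Prod>q\<in>Q. c q / b q)"
  unfolding prod.distrib[symmetric] using assms by (intro prod.cong refl) simp

lemma sum_hahn_term_closed_form:
  fixes \<beta> x :: real
  assumes "pochhammer (x + \<beta> + 1) (\<Sum>k=1..p. n k) \<noteq> 0"
    and tails: "\<And>i. i \<in> {1..p} \<Longrightarrow> pochhammer (\<alpha> i + 1) (\<Sum>j=i..p. n j) \<noteq> 0
           \<and> pochhammer (\<alpha> i + \<beta> + real (\<Sum>k=1..i. n k) + 1) (\<Sum>j=Suc i..p. n j) \<noteq> 0"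
  shows "(\<Prod>i=1..p. pochhammer (\<alpha> i + 1) (n i)
                     / pochhammer (\<alpha> i + \<beta> + real (\<Sum>k=1..p. n k) + 1) (n i))
         * (\<Sum>l\<in>PiE {1..p} (\<lambda>j. {0..n j}). hahn_term p n \<alpha> x 1 \<beta> l)
       = pochhammer (\<beta> + 1) (\<Sum>k=1..p. n k) / pochhammer (x + \<beta> + 1) (\<Sum>k=1..p. n k)
         * (\<Prod>q=1..p. pochhammer (\<alpha> q - x + 1) (n q)
                        / pochhammer (\<alpha> q + \<beta> + real (\<Sum>k=1..p. n k) + 1) (n q))"
proof -
  have "pochhammer (\<alpha> q + 1) (n q) \<noteq> 0" if "q \<in> {1..p}" for q
    using tails[OF that] pochhammer_neq_0_mono member_le_sum[of q "{q..p}" n] that by fastforce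
  then have cancel: "(\<Prod>i=1..p. pochhammer (\<alpha> i + 1) (n i)
                / pochhammer (\<alpha> i + \<beta> + real (\<Sum>k=1..p. n k) + 1) (n i))
             * (\<Prod>q=1..p. pochhammer (\<alpha> q - x + 1) (n q) / pochhammer (\<alpha> q + 1) (n q))
           = (\<Prod>q=1..p. pochhammer (\<alpha> q - x + 1) (n q)
                / pochhammer (\<alpha> q + \<beta> + real (\<Sum>k=1..p. n k) + 1) (n q))"
    by (rule prod_divide_cancel)
  have sum_eq: "(\<Sum>l\<in>PiE {1..p} (\<lambda>j. {0..n j}). hahn_term p n \<alpha> x 1 \<beta> l)
      = pochhammer (\<beta> + 1) (\<Sum>k=1..p. n k) / pochhammer (x + \<beta> + 1) (\<Sum>k=1..p. n k)
        * (\<Prod>q=1..p. pochhammer (\<alpha> q - x + 1) (n q) / pochhammer (\<alpha> q + 1) (n q))"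
    using sum_hahn_term[of 1 p x \<beta> n \<alpha>] assms by simp
  show ?thesis
    unfolding sum_eq cancel[symmetric] by (simp only: ac_simps)
qed

theorem mainTheorem1:
  fixes p N :: nat and n :: "nat \<Rightarrow> nat" and \<alpha> :: "nat \<Rightarrow> real" and \<beta> x :: real
  assumes "p \<ge> 1"
    and "(\<Sum>k=1..p. n k) \<le> N"
    and "\<And>i. i \<in> {1..p} \<Longrightarrow>
           pochhammer (\<alpha> i + \<beta> + real (\<Sum>k=1..p. n k) + 1) (n i) \<noteq> 0"
    and "\<And>l i. l \<in> (PiE {1..p} (\<lambda>j. {0..n j})) \<Longrightarrow> i \<in> {1..p} \<Longrightarrow>
           pochhammer (\<alpha> i + \<beta> + real (\<Sum>k=1..i. n k) + 1) (\<Sum>j=i..p. l j) \<noteq> 0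
         \<and> pochhammer (\<alpha> i + 1) (\<Sum>j=i..p. l j) \<noteq> 0
         \<and> pochhammer (\<alpha> i + \<beta> + real (\<Sum>k=1..i. n k) + 1) (\<Sum>j=i+1..p. l j) \<noteq> 0"
    and "\<And>l. l \<in> (PiE {1..p} (\<lambda>j. {0..n j})) \<Longrightarrow>
           pochhammer (- real N) (\<Sum>k=1..p. l k) \<noteq> 0
         \<and> pochhammer (x + \<beta> + 1) (\<Sum>k=1..p. l k) \<noteq> 0"
    and "pochhammer (x + \<beta> + 1) (\<Sum>k=1..p. n k) \<noteq> 0"
  shows "(\<Sum>l\<in>(PiE {1..p} (\<lambda>j. {0..n j})).
            pochhammer (- real N) (\<Sum>k=1..p. l k) * pochhammer x (\<Sum>k=1..p. l k)
            / pochhammer (x + \<beta> + 1) (\<Sum>k=1..p. l k) * hahnC p N \<alpha> \<beta> n l)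
       = pochhammer (\<beta> + 1) (\<Sum>k=1..p. n k) * pochhammer (- real N) (\<Sum>k=1..p. n k)
           / pochhammer (x + \<beta> + 1) (\<Sum>k=1..p. n k)
         * (\<Prod>q=1..p. pochhammer (\<alpha> q - x + 1) (n q)
                        / pochhammer (\<alpha> q + \<beta> + real (\<Sum>k=1..p. n k) + 1) (n q))"
proof -
  have tails: "pochhammer (\<alpha> i + 1) (\<Sum>j=i..p. n j) \<noteq> 0
      \<and> pochhammer (\<alpha> i + \<beta> + real (\<Sum>k=1..i. n k) + 1) (\<Sum>j=Suc i..p. n j) \<noteq> 0"
    if "i \<in> {1..p}" for i
  proof -
    have "(\<Sum>j=t..p. restrict n {1..p} j) = (\<Sum>j=t..p. n j)" if "t \<ge> 1" for t
      using that by (intro sum.cong) auto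
    then show ?thesis
      using assms(4)[of "restrict n {1..p}" i] that by simp
  qed
  have "(\<Sum>l\<in>PiE {1..p} (\<lambda>j. {0..n j}).
            pochhammer (- real N) (\<Sum>k=1..p. l k) * pochhammer x (\<Sum>k=1..p. l k)
            / pochhammer (x + \<beta> + 1) (\<Sum>k=1..p. l k) * hahnC p N \<alpha> \<beta> n l)
      = pochhammer (- real N) (\<Sum>k=1..p. n k)
        * ((\<Prod>i=1..p. pochhammer (\<alpha> i + 1) (n i)
                        / pochhammer (\<alpha> i + \<beta> + real (\<Sum>k=1..p. n k) + 1) (n i))
           * (\<Sum>l\<in>PiE {1..p} (\<lambda>j. {0..n j}). hahn_term p n \<alpha> x 1 \<beta> l))"
    unfolding sum_distrib_left mult.assoc[symmetric]
    by (intro sum.cong refl hahn_summand_eq_hahn_term assms(1) conjunct1[OF assms(5)])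
  also have "\<dots> = pochhammer (- real N) (\<Sum>k=1..p. n k)
        * (pochhammer (\<beta> + 1) (\<Sum>k=1..p. n k) / pochhammer (x + \<beta> + 1) (\<Sum>k=1..p. n k)
           * (\<Prod>q=1..p. pochhammer (\<alpha> q - x + 1) (n q)
                          / pochhammer (\<alpha> q + \<beta> + real (\<Sum>k=1..p. n k) + 1) (n q)))"
    using sum_hahn_term_closed_form[OF assms(6)] tails by simp
  finally show ?thesis
    by (simp add: ac_simps)
qed

end
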